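(* Let $q \geq 5$ be a prime power and let $\mathcal{X}$ be a plane curve of degree $q-1$ defined over $\mathbb{F}_q$ without $\mathbb{F}_q$-linear components with $\mathrm{N}_q(\mathcal{X}) = (q-1)^2$. If $P \in \mathcal{X}(\mathbb{F}_q)$, then $\psi_{q-1}(P) \geq 3$. In particular $a_{q-1} \geq 3(q-1)$. Moreover, if $\psi_{q-1}(P) = 3$, then among the $q+1$ lines of $\mathbb{P}^2(\mathbb{F}_q)$ through $P$, exactly $3$ contain $q-1$ points of $\mathcal{X}(\mathbb{F}_q)$ and the remaining $q-2$ contain exactly $q-2$ points of $\mathcal{X}(\mathbb{F}_q)$.
   Context: $\mathcal{X}(\mathbb{F}_q)=\mathcal{X}\cap\mathbb{P}^2(\mathbb{F}_q)$, $\mathrm{N}_q(\mathcal{X})=\#\mathcal{X}(\mathbb{F}_q)$; "without $\mathbb{F}_q$-linear components" means no line defined over $\mathbb{F}_q$ is a component. For $0\le i\le q+1$, $\mathcal{A}_i$ is the set of lines $l$ defined over $\mathbb{F}_q$ with $\#(l\cap\mathcal{X}(\mathbb{F}_q)) = i$, and $a_i = \#\mathcal{A}_i$. For a point $P \in \mathbb{P}^2(\mathbb{F}_q)$, $\psi_i(P)$ is the number of lines in $\mathcal{A}_i$ passing through $P$. *)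

theory Defs
  imports Main "HOL-Library.Poly_Mapping" "HOL-Library.Product_Plus" "HOL-Library.Cardinality"
begin

text \<open>Ternary polynomials over a field: finitely supported maps from exponent
triples (i,j,k) (standing for X^i Y^j Z^k) to coefficients.\<close>

type_synonym 'a tpoly = "(nat \<times> nat \<times> nat) \<Rightarrow>\<^sub>0 'a"

definition homogeneous_of_degree :: "nat \<Rightarrow> 'a::zero tpoly \<Rightarrow> bool" where
  "homogeneous_of_degree d F \<longleftrightarrow> F \<noteq> 0 \<and> (\<forall>(i,j,k)\<in>Poly_Mapping.keys F. i + j + k = d)"

definition tpeval :: "'a::comm_semiring_1 tpoly \<Rightarrow> 'a \<times> 'a \<times> 'a \<Rightarrow> 'a" where
  "tpeval F v = (case v of (x,y,z) \<Rightarrow>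
     (\<Sum>m\<in>Poly_Mapping.keys F. case m of (i,j,k) \<Rightarrow> Poly_Mapping.lookup F m * x ^ i * y ^ j * z ^ k))"

definition linear_form :: "'a \<times> 'a \<times> 'a \<Rightarrow> 'a::monoid_add tpoly" where
  "linear_form w = (case w of (a,b,c) \<Rightarrow>
     Poly_Mapping.single (1,0,0) a + Poly_Mapping.single (0,1,0) b + Poly_Mapping.single (0,0,1) c)"

text \<open>No line defined over the base field is a component: no nonzero linear form
with coefficients in the field divides the defining polynomial.\<close>
definition no_linear_components :: "'a::field tpoly \<Rightarrow> bool" where
  "no_linear_components F \<longleftrightarrow> (\<forall>w. w \<noteq> (0,0,0) \<longrightarrow> \<not> linear_form w dvd F)"

text \<open>Points (and, dually, lines) of the projective plane over the field 'a:
classes of nonzero triples modulo nonzero scalars.\<close>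
definition proj_class :: "'a::field \<times> 'a \<times> 'a \<Rightarrow> ('a \<times> 'a \<times> 'a) set" where
  "proj_class v = {(c * fst v, c * fst (snd v), c * snd (snd v)) | c. c \<noteq> 0}"

definition P2 :: "('a::field \<times> 'a \<times> 'a) set set" where
  "P2 = {proj_class v | v. v \<noteq> (0,0,0)}"

definition dot3 :: "'a::comm_semiring_1 \<times> 'a \<times> 'a \<Rightarrow> 'a \<times> 'a \<times> 'a \<Rightarrow> 'a" where
  "dot3 v w = fst v * fst w + fst (snd v) * fst (snd w) + snd (snd v) * snd (snd w)"

definition incident :: "('a::field \<times> 'a \<times> 'a) set \<Rightarrow> ('a \<times> 'a \<times> 'a) set \<Rightarrow> bool" where
  "incident P l \<longleftrightarrow> (\<exists>v\<in>P. \<exists>w\<in>l. dot3 v w = 0)"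

definition rat_points :: "'a::field tpoly \<Rightarrow> ('a \<times> 'a \<times> 'a) set set" where
  "rat_points F = {P \<in> P2. \<exists>v\<in>P. tpeval F v = 0}"

definition Nq :: "'a::field tpoly \<Rightarrow> nat" where
  "Nq F = card (rat_points F)"

definition line_count :: "'a::field tpoly \<Rightarrow> ('a \<times> 'a \<times> 'a) set \<Rightarrow> nat" where
  "line_count F l = card {P \<in> rat_points F. incident P l}"

definition lines_A :: "'a::field tpoly \<Rightarrow> nat \<Rightarrow> ('a \<times> 'a \<times> 'a) set set" where
  "lines_A F i = {l \<in> P2. line_count F l = i}"

definition a_count :: "'a::field tpoly \<Rightarrow> nat \<Rightarrow> nat" where
  "a_count F i = card (lines_A F i)"

definition psi :: "'a::field tpoly \<Rightarrow> nat \<Rightarrow> ('a \<times> 'a \<times> 'a) set \<Rightarrow> nat" where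
  "psi F i P = card {l \<in> lines_A F i. incident P l}"

end

theory Submission
  imports Defs "HOL-Computational_Algebra.Polynomial"
begin

(*
  A line l over F_q meets X(F_q) in at most deg F = q - 1 points: eliminating one variable by the
  equation of l turns F into a binary form of degree q - 1 congruent to F modulo the linear form
  of l, and a binary form with more than q - 1 projectively distinct zeros is zero, which would
  make l a component.

  The q + 1 lines through P cover X(F_q) and pairwise meet only in P, so their
  point counts add up to (q - 1)^2 + q. Every count is at most q - 1, and
  (q + 1)(q - 1) - ((q - 1)^2 + q) = q - 2, so at most q - 2 lines through P fall short of q - 1:
  at least 3 are full, and if exactly 3 are, each of the other q - 2 misses exactly one point.
  Counting incidences between X(F_q) and the full lines gives (q - 1) a_{q-1} >= 3 (q - 1)^2.
*)

section \<open>Evaluation and substitution\<close>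

definition smul :: "'a::comm_semiring_1 \<Rightarrow> 'a \<times> 'a \<times> 'a \<Rightarrow> 'a \<times> 'a \<times> 'a" where
  "smul c v = (c * fst v, c * fst (snd v), c * snd (snd v))"

definition tdeg :: "nat \<times> nat \<times> nat \<Rightarrow> nat" where
  "tdeg m = fst m + fst (snd m) + snd (snd m)"

text \<open>Over \<^typ>\<open>'a tpoly\<close> itself, this substitutes polynomials for the variables.\<close>
definition monom_at :: "nat \<times> nat \<times> nat \<Rightarrow> 'a::comm_semiring_1 \<times> 'a \<times> 'a \<Rightarrow> 'a" where
  "monom_at m v = (case m of (i,j,k) \<Rightarrow> case v of (x,y,z) \<Rightarrow> x ^ i * y ^ j * z ^ k)"

lemma tdeg_add: "tdeg (m + n) = tdeg m + tdeg n"
  by (simp add: tdeg_def)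

lemma monom_at_0 [simp]: "monom_at 0 v = 1"
  by (cases v) (simp add: monom_at_def zero_prod_def)

lemma monom_at_add: "monom_at (m + n) v = monom_at m v * monom_at n v"
  by (cases m; cases n; cases v) (simp add: monom_at_def power_add mult_ac)

lemma monom_at_smul: "monom_at m (smul c v) = c ^ tdeg m * monom_at m v"
  by (cases m; cases v)
    (simp add: monom_at_def smul_def tdeg_def power_add power_mult_distrib mult_ac)

lemma tpeval_conv_sum: "tpeval F v = (\<Sum>m\<in>Poly_Mapping.keys F. Poly_Mapping.lookup F m * monom_at m v)"
  unfolding tpeval_def monom_at_def
  by (cases v) (auto intro!: sum.cong simp: mult.assoc split: prod.splits)

lemma tpeval_conv_sum_superset:
  assumes "finite M" "Poly_Mapping.keys F \<subseteq> M"
  shows "tpeval F v = (\<Sum>m\<in>M. Poly_Mapping.lookup F m * monom_at m v)"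
  unfolding tpeval_conv_sum
  by (rule sum.mono_neutral_left) (use assms in \<open>auto simp: in_keys_iff\<close>)

lemma tpeval_0 [simp]: "tpeval 0 v = 0"
  by (simp add: tpeval_conv_sum)

lemma tpeval_1 [simp]: "tpeval 1 v = 1"
  by (simp add: tpeval_conv_sum)

lemma tpeval_single: "tpeval (Poly_Mapping.single m c) v = c * monom_at m v"
  by (simp add: tpeval_conv_sum)

lemma tpeval_add: "tpeval (F + G) v = tpeval F v + tpeval G v"
proof -
  let ?M = "Poly_Mapping.keys F \<union> Poly_Mapping.keys G"
  have "tpeval (F + G) v = (\<Sum>m\<in>?M. Poly_Mapping.lookup (F + G) m * monom_at m v)"
    by (rule tpeval_conv_sum_superset) (auto dest: keys_add[THEN subsetD])
  also have "\<dots> = (\<Sum>m\<in>?M. Poly_Mapping.lookup F m * monom_at m v)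
                 + (\<Sum>m\<in>?M. Poly_Mapping.lookup G m * monom_at m v)"
    by (simp add: lookup_add distrib_right sum.distrib)
  also have "\<dots> = tpeval F v + tpeval G v"
    by (simp add: tpeval_conv_sum_superset[symmetric])
  finally show ?thesis .
qed

lemma tpeval_sum: "tpeval (\<Sum>i\<in>I. f i) v = (\<Sum>i\<in>I. tpeval (f i) v)"
  by (induction I rule: infinite_finite_induct) (auto simp: tpeval_add)

lemma poly_mapping_sum_single:
  "F = (\<Sum>m\<in>Poly_Mapping.keys F. Poly_Mapping.single m (Poly_Mapping.lookup F m))"
  by (rule poly_mapping_eqI) (simp add: lookup_sum lookup_single when_def in_keys_iff)

lemma tpeval_mult: "tpeval (F * G) v = tpeval F v * tpeval G v"
proof -
  have "F * G = (\<Sum>m\<in>Poly_Mapping.keys F. \<Sum>n\<in>Poly_Mapping.keys G.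
      Poly_Mapping.single (m + n) (Poly_Mapping.lookup F m * Poly_Mapping.lookup G n))"
    by (subst poly_mapping_sum_single[of F], subst poly_mapping_sum_single[of G])
      (simp add: sum_product mult_single)
  then have "tpeval (F * G) v = (\<Sum>m\<in>Poly_Mapping.keys F. \<Sum>n\<in>Poly_Mapping.keys G.
      (Poly_Mapping.lookup F m * monom_at m v) * (Poly_Mapping.lookup G n * monom_at n v))"
    by (simp add: tpeval_sum tpeval_single monom_at_add mult_ac)
  then show ?thesis
    by (simp add: tpeval_conv_sum sum_product)
qed

lemma tpeval_power: "tpeval (F ^ n) v = tpeval F v ^ n"
  by (induction n) (auto simp: tpeval_mult)

lemma tpeval_linear_form: "tpeval (linear_form w) v = dot3 w v"
  by (cases w; cases v) (simp add: linear_form_def tpeval_add tpeval_single monom_at_def dot3_def)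

lemma linear_form_diff:
  fixes u u' :: "'a::comm_ring_1 \<times> 'a \<times> 'a"
  shows "linear_form u - linear_form u' = linear_form (u - u')"
  by (cases u; cases u') (simp add: linear_form_def single_diff algebra_simps)

lemma linear_form_smul: "linear_form (smul k w) = Poly_Mapping.single 0 k * linear_form w"
  by (cases w) (simp add: linear_form_def smul_def distrib_left mult_single)

lemma linear_form_dvd_diff:
  fixes u u' w :: "'a::comm_ring_1 \<times> 'a \<times> 'a"
  shows "u - u' = smul k w \<Longrightarrow> linear_form w dvd linear_form u - linear_form u'"
  by (simp add: linear_form_diff linear_form_smul)

definition varX :: "'a::comm_semiring_1 tpoly" where "varX = linear_form (1, 0, 0)"
definition varY :: "'a::comm_semiring_1 tpoly" where "varY = linear_form (0, 1, 0)"
definition varZ :: "'a::comm_semiring_1 tpoly" where "varZ = linear_form (0, 0, 1)"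

lemma monom_at_vars: "monom_at m (varX, varY, varZ) = Poly_Mapping.single m 1"
proof -
  have vars: "varX = Poly_Mapping.single (1,0,0) 1" "varY = Poly_Mapping.single (0,1,0) 1"
    "varZ = Poly_Mapping.single (0,0,1) 1"
    by (simp_all add: varX_def varY_def varZ_def linear_form_def)
  have one: "Poly_Mapping.single (0,0,0) 1 = 1"
    by (metis single_one zero_prod_def)
  have pow: "varX ^ i = Poly_Mapping.single (i,0,0) 1" "varY ^ i = Poly_Mapping.single (0,i,0) 1"
    "varZ ^ i = Poly_Mapping.single (0,0,i) 1" for i
    by (induction i) (simp_all add: vars one mult_single)
  show ?thesis
    by (cases m) (simp add: monom_at_def mult_single pow)
qed

definition tsubst :: "'a::comm_semiring_1 tpoly \<Rightarrow> 'a tpoly \<Rightarrow> 'a tpoly \<Rightarrow> 'a tpoly \<Rightarrow> 'a tpoly" where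
  "tsubst F A B C =
     (\<Sum>m\<in>Poly_Mapping.keys F. Poly_Mapping.single 0 (Poly_Mapping.lookup F m) * monom_at m (A, B, C))"

lemma tsubst_vars: "tsubst F varX varY varZ = F"
  unfolding tsubst_def monom_at_vars
  by (subst (3) poly_mapping_sum_single) (simp add: mult_single)

lemma tpeval_tsubst:
  "tpeval (tsubst F A B C) v = tpeval F (tpeval A v, tpeval B v, tpeval C v)"
proof -
  have "tpeval (monom_at m (A, B, C)) v = monom_at m (tpeval A v, tpeval B v, tpeval C v)" for m
    by (cases m) (simp add: monom_at_def tpeval_mult tpeval_power)
  then show ?thesis
    by (simp add: tsubst_def tpeval_sum tpeval_mult tpeval_single tpeval_conv_sum[of F])
qed

lemma dvd_monom_at_diff:
  fixes L :: "'a::comm_ring_1"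
  assumes "L dvd a - a'" "L dvd b - b'" "L dvd c - c'"
  shows "L dvd monom_at m (a, b, c) - monom_at m (a', b', c')"
proof -
  have pow: "L dvd x ^ n - y ^ n" if "L dvd x - y" for x y :: 'a and n
    using that dvd_trans dvd_triv_left power_diff_sumr2 by metis
  have mult: "L dvd x * y - x' * y'" if "L dvd x - x'" "L dvd y - y'" for x x' y y' :: 'a
  proof -
    have "x * y - x' * y' = x * (y - y') + y' * (x - x')" by (simp add: algebra_simps)
    then show ?thesis using that by simp
  qed
  show ?thesis
    using assms by (cases m) (simp add: monom_at_def mult pow)
qed

lemma dvd_tsubst_diff:
  fixes L :: "'a::comm_ring_1 tpoly"
  assumes "L dvd A - A'" "L dvd B - B'" "L dvd C - C'"
  shows "L dvd tsubst F A B C - tsubst F A' B' C'"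
  unfolding tsubst_def sum_subtractf[symmetric] right_diff_distrib[symmetric]
  using dvd_monom_at_diff[OF assms] by (intro dvd_sum) simp

section \<open>Forms supported on a set of monomials\<close>

definition homogeneous_in :: "(nat \<times> nat \<times> nat \<Rightarrow> bool) \<Rightarrow> nat \<Rightarrow> 'a::zero tpoly \<Rightarrow> bool" where
  "homogeneous_in \<phi> n F \<longleftrightarrow> (\<forall>m\<in>Poly_Mapping.keys F. \<phi> m \<and> tdeg m = n)"

lemma homogeneous_in_if_homogeneous_of_degree:
  "homogeneous_of_degree d F \<Longrightarrow> homogeneous_in (\<lambda>_. True) d F"
  unfolding homogeneous_of_degree_def homogeneous_in_def tdeg_def by auto

lemma homogeneous_in_single:
  "(c \<noteq> 0 \<Longrightarrow> \<phi> m \<and> tdeg m = n) \<Longrightarrow> homogeneous_in \<phi> n (Poly_Mapping.single m c)"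
  by (simp add: homogeneous_in_def)

lemma homogeneous_in_add:
  "homogeneous_in \<phi> n F \<Longrightarrow> homogeneous_in \<phi> n G \<Longrightarrow> homogeneous_in \<phi> n (F + G)"
  unfolding homogeneous_in_def using keys_add[of F G] by blast

lemma homogeneous_in_sum:
  "(\<And>i. i \<in> I \<Longrightarrow> homogeneous_in \<phi> n (f i)) \<Longrightarrow> homogeneous_in \<phi> n (\<Sum>i\<in>I. f i)"
  by (induction I rule: infinite_finite_induct)
    (auto simp: homogeneous_in_add, simp_all add: homogeneous_in_def)

lemma homogeneous_in_mult:
  fixes F G :: "'a::comm_semiring_1 tpoly"
  assumes "\<And>m m'. \<phi> m \<Longrightarrow> \<phi> m' \<Longrightarrow> \<phi> (m + m')"
    and "homogeneous_in \<phi> n F" "homogeneous_in \<phi> k G"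
  shows "homogeneous_in \<phi> (n + k) (F * G)"
  unfolding homogeneous_in_def
proof
  fix m assume "m \<in> Poly_Mapping.keys (F * G)"
  then obtain a b where "m = a + b" "a \<in> Poly_Mapping.keys F" "b \<in> Poly_Mapping.keys G"
    using keys_mult by blast
  then show "\<phi> m \<and> tdeg m = n + k"
    using assms unfolding homogeneous_in_def by (auto simp: tdeg_add)
qed

lemma homogeneous_in_monom_at:
  fixes A B C :: "'a::comm_semiring_1 tpoly"
  assumes "\<And>m m'. \<phi> m \<Longrightarrow> \<phi> m' \<Longrightarrow> \<phi> (m + m')" "\<phi> 0"
    and "homogeneous_in \<phi> 1 A" "homogeneous_in \<phi> 1 B" "homogeneous_in \<phi> 1 C"
  shows "homogeneous_in \<phi> (tdeg m) (monom_at m (A, B, C))"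
proof -
  have pow: "homogeneous_in \<phi> k (F ^ k)" if "homogeneous_in \<phi> 1 F" for F :: "'a tpoly" and k
  proof (induction k)
    case 0
    show ?case by (simp add: homogeneous_in_def tdeg_def assms(2))
  next
    case (Suc k)
    show ?case
      using homogeneous_in_mult[where \<phi> = \<phi>, OF assms(1) that Suc] by simp
  qed
  obtain i j k where m: "m = (i, j, k)" by (cases m)
  have "homogeneous_in \<phi> (i + j + k) (A ^ i * B ^ j * C ^ k)"
    by (intro homogeneous_in_mult[where \<phi> = \<phi>, OF assms(1)] pow assms(3-5))
  then show ?thesis unfolding m monom_at_def tdeg_def by simp
qed

lemma homogeneous_in_tsubst:
  fixes F A B C :: "'a::comm_semiring_1 tpoly"
  assumes "\<And>m m'. \<phi> m \<Longrightarrow> \<phi> m' \<Longrightarrow> \<phi> (m + m')" "\<phi> 0"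
    and "homogeneous_in \<phi> 1 A" "homogeneous_in \<phi> 1 B" "homogeneous_in \<phi> 1 C"
    and "homogeneous_in (\<lambda>_. True) d F"
  shows "homogeneous_in \<phi> d (tsubst F A B C)"
  unfolding tsubst_def
proof (rule homogeneous_in_sum)
  fix m assume "m \<in> Poly_Mapping.keys F"
  then have "tdeg m = d" using assms(6) by (simp add: homogeneous_in_def)
  moreover have "homogeneous_in \<phi> 0 (Poly_Mapping.single 0 (Poly_Mapping.lookup F m))"
    by (rule homogeneous_in_single) (simp add: assms(2) tdeg_def)
  then have "homogeneous_in \<phi> (0 + tdeg m)
      (Poly_Mapping.single 0 (Poly_Mapping.lookup F m) * monom_at m (A, B, C))"
    by (intro homogeneous_in_mult[where \<phi> = \<phi>] assms(1) homogeneous_in_monom_at[OF assms(1-5)])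
  ultimately show "homogeneous_in \<phi> d
      (Poly_Mapping.single 0 (Poly_Mapping.lookup F m) * monom_at m (A, B, C))"
    by simp
qed

lemma homogeneous_in_linear_form:
  assumes "a \<noteq> 0 \<Longrightarrow> \<phi> (1,0,0)" "b \<noteq> 0 \<Longrightarrow> \<phi> (0,1,0)" "c \<noteq> 0 \<Longrightarrow> \<phi> (0,0,1)"
  shows "homogeneous_in \<phi> 1 (linear_form (a, b, c))"
  unfolding linear_form_def using assms
  by (simp add: homogeneous_in_add homogeneous_in_single tdeg_def)

lemma tpeval_smul:
  assumes "homogeneous_in \<phi> d F"
  shows "tpeval F (smul c v) = c ^ d * tpeval F v"
  unfolding tpeval_conv_sum sum_distrib_left
  by (rule sum.cong) (use assms in \<open>auto simp: homogeneous_in_def monom_at_smul mult_ac\<close>)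

lemma poly_sum_monom_dehomogenize:
  fixes x y :: "'a::field"
  assumes "y \<noteq> 0"
  shows "poly (\<Sum>s\<le>d. monom (r s) s) (x / y) * y ^ d = (\<Sum>s\<le>d. r s * x ^ s * y ^ (d - s))"
  unfolding poly_sum poly_monom sum_distrib_right
proof (rule sum.cong)
  fix s assume "s \<in> {..d}"
  then have "y ^ d = y ^ s * y ^ (d - s)" by (simp flip: power_add)
  then show "r s * (x / y) ^ s * y ^ d = r s * x ^ s * y ^ (d - s)"
    using assms by (simp add: power_divide)
qed simp

lemma card_affine_roots_le_degree:
  fixes P :: "'a::field poly" and Q :: "('a \<times> 'a) set"
  assumes "P \<noteq> 0" and "\<And>p. p \<in> Q \<Longrightarrow> snd p \<noteq> 0"
    and nonprop: "\<And>p p' c. p \<in> Q \<Longrightarrow> p' \<in> Q \<Longrightarrow> p = (c * fst p', c * snd p') \<Longrightarrow> p = p'"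
    and roots: "\<And>p. p \<in> Q \<Longrightarrow> poly P (fst p / snd p) = 0"
  shows "card Q \<le> degree P"
proof -
  have "inj_on (\<lambda>p. fst p / snd p) Q"
  proof (rule inj_onI)
    fix p p' assume "p \<in> Q" "p' \<in> Q" "fst p / snd p = fst p' / snd p'"
    then have "p = (snd p / snd p' * fst p', snd p / snd p' * snd p')"
      using assms(2) by (auto simp: field_simps prod_eq_iff)
    then show "p = p'" using nonprop \<open>p \<in> Q\<close> \<open>p' \<in> Q\<close> by blast
  qed
  then have "card Q = card ((\<lambda>p. fst p / snd p) ` Q)" by (simp add: card_image)
  also have "\<dots> \<le> card {x. poly P x = 0}"
    using roots by (intro card_mono poly_roots_finite[OF \<open>P \<noteq> 0\<close>]) auto
  also have "\<dots> \<le> degree P" by (rule card_poly_roots_bound[OF \<open>P \<noteq> 0\<close>])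
  finally show ?thesis .
qed

lemma binary_form_eq_0:
  fixes r :: "nat \<Rightarrow> 'a::field" and Q :: "('a \<times> 'a) set"
  assumes "finite Q" "d < card Q" "(0, 0) \<notin> Q"
    and nonprop: "\<And>p p' c. p \<in> Q \<Longrightarrow> p' \<in> Q \<Longrightarrow> p = (c * fst p', c * snd p') \<Longrightarrow> p = p'"
    and zeros: "\<And>x y. (x, y) \<in> Q \<Longrightarrow> (\<Sum>s\<le>d. r s * x ^ s * y ^ (d - s)) = 0"
  shows "\<forall>s\<le>d. r s = 0"
proof -
  define P where "P = (\<Sum>s\<le>d. monom (r s) s)"
  have coeff_P: "coeff P s = (if s \<le> d then r s else 0)" for s
    by (simp add: P_def coeff_sum coeff_monom)
  have "degree P \<le> d"
    by (rule degree_le) (simp add: coeff_P)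
  define Q1 where "Q1 = {p \<in> Q. snd p \<noteq> 0}"
  have Q1_roots: "card Q1 \<le> degree P" if "P \<noteq> 0"
  proof (rule card_affine_roots_le_degree[OF that])
    show "poly P (fst p / snd p) = 0" if "p \<in> Q1" for p
      using that zeros poly_sum_monom_dehomogenize[where x = "fst p" and y = "snd p" and r = r and d = d]
      by (cases p) (simp add: Q1_def P_def)
  qed (use nonprop in \<open>auto simp: Q1_def\<close>)
  have card_Q: "card Q = card Q1 + card (Q - Q1)"
    using \<open>finite Q\<close> by (simp add: Q1_def card_Diff_subset card_mono)
  have "P = 0"
  proof (rule ccontr)
    assume "P \<noteq> 0"
    show False
    proof (cases "Q - Q1 = {}")
      case True
      then show False
        using card_Q Q1_roots[OF \<open>P \<noteq> 0\<close>] \<open>degree P \<le> d\<close> \<open>d < card Q\<close> by (simp only: card.empty)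
    next
      case False
      then obtain x where x: "(x, 0) \<in> Q - Q1" "x \<noteq> 0"
        using \<open>(0, 0) \<notin> Q\<close> by (auto simp: Q1_def) (metis prod.collapse)
      have "Q - Q1 \<subseteq> {(x, 0)}"
      proof
        fix p assume p: "p \<in> Q - Q1"
        then have "p = (fst p / x * x, fst p / x * 0)"
          using x(2) by (auto simp: Q1_def prod_eq_iff)
        then show "p \<in> {(x, 0)}" using nonprop p x(1) by (metis Diff_iff fst_conv snd_conv singletonI)
      qed
      then have "card (Q - Q1) \<le> 1"
        using card_mono[of "{(x, 0)}"] by simp
      have "(\<Sum>s\<le>d. r s * x ^ s * 0 ^ (d - s)) = r d * x ^ d"
        by (subst sum.remove[of _ d]) (auto intro!: sum.neutral)
      then have "r d = 0" using zeros[of x 0] x by simp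
      then have "degree P < d"
        using \<open>degree P \<le> d\<close> \<open>P \<noteq> 0\<close> coeff_P by (metis le_neq_implies_less leading_coeff_0_iff)
      then show False
        using card_Q Q1_roots[OF \<open>P \<noteq> 0\<close>] \<open>d < card Q\<close> \<open>card (Q - Q1) \<le> 1\<close> by simp
    qed
  qed
  then show ?thesis using coeff_P by (metis coeff_0)
qed

lemma homogeneous_in_eq_0_if_zeros:
  fixes R :: "'a::field tpoly" and pt :: "'a \<Rightarrow> 'a \<Rightarrow> 'a \<times> 'a \<times> 'a"
  assumes R: "homogeneous_in \<phi> d R"
    and g: "inj_on g {..d}" "\<And>m. \<phi> m \<Longrightarrow> tdeg m = d \<Longrightarrow> m \<in> g ` {..d}"
    and pt: "\<And>s x y. s \<le> d \<Longrightarrow> monom_at (g s) (pt x y) = x ^ s * y ^ (d - s)"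
    and Q: "finite Q" "d < card Q" "(0, 0) \<notin> Q"
      "\<And>p p' c. p \<in> Q \<Longrightarrow> p' \<in> Q \<Longrightarrow> p = (c * fst p', c * snd p') \<Longrightarrow> p = p'"
    and zeros: "\<And>x y. (x, y) \<in> Q \<Longrightarrow> tpeval R (pt x y) = 0"
  shows "R = 0"
proof -
  have keys_R: "Poly_Mapping.keys R \<subseteq> g ` {..d}"
    using R g(2) unfolding homogeneous_in_def by blast
  have eval: "tpeval R (pt x y) = (\<Sum>s\<le>d. Poly_Mapping.lookup R (g s) * x ^ s * y ^ (d - s))"
    for x y
    by (simp add: tpeval_conv_sum_superset[OF _ keys_R] sum.reindex[OF g(1)] pt mult.assoc)
  have "\<forall>s\<le>d. Poly_Mapping.lookup R (g s) = 0"
  proof (rule binary_form_eq_0[OF Q])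
    fix x y assume "(x, y) \<in> Q"
    show "(\<Sum>s\<le>d. Poly_Mapping.lookup R (g s) * x ^ s * y ^ (d - s)) = 0"
      using zeros[OF \<open>(x, y) \<in> Q\<close>] unfolding eval .
  qed
  then show "R = 0"
    using keys_R by (intro poly_mapping_eqI) (auto simp: in_keys_iff)
qed

section \<open>Points and lines of the projective plane\<close>

lemma smul_smul [simp]: "smul a (smul b v) = smul (a * b) v"
  by (simp add: smul_def mult_ac)

lemma smul_1 [simp]: "smul 1 v = v"
  by (simp add: smul_def)

lemma smul_eq_0_iff: "smul c (v :: 'a::field \<times> 'a \<times> 'a) = (0, 0, 0) \<longleftrightarrow> c = 0 \<or> v = (0, 0, 0)"
  by (cases v) (auto simp: smul_def)

lemma dot3_smul: "dot3 (smul c v) (smul e w) = c * e * dot3 v w"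
  by (simp add: dot3_def smul_def algebra_simps)

lemma proj_class_conv_smul: "proj_class v = {smul c v | c. c \<noteq> 0}"
  by (simp add: proj_class_def smul_def)

lemma proj_class_self: "v \<in> proj_class v"
  unfolding proj_class_conv_smul by (rule CollectI, rule exI[of _ 1]) simp

lemma proj_class_eq:
  fixes v :: "'a::field \<times> 'a \<times> 'a"
  assumes "u \<in> proj_class v"
  shows "proj_class u = proj_class v"
proof -
  obtain c where c: "c \<noteq> 0" "u = smul c v" using assms unfolding proj_class_conv_smul by auto
  show ?thesis
  proof
    show "proj_class u \<subseteq> proj_class v"
      unfolding proj_class_conv_smul c(2) using c(1) by auto
    show "proj_class v \<subseteq> proj_class u"
    proof
      fix x assume "x \<in> proj_class v"
      then obtain e where "e \<noteq> 0" "x = smul e v" unfolding proj_class_conv_smul by auto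
      then have "x = smul (e / c) u" "e / c \<noteq> 0" using c by simp_all
      then show "x \<in> proj_class u" unfolding proj_class_conv_smul by blast
    qed
  qed
qed

lemma proj_class_in_P2: "v \<noteq> (0, 0, 0) \<Longrightarrow> proj_class v \<in> P2"
  unfolding P2_def by blast

lemma P2_eq_proj_class: "P \<in> P2 \<Longrightarrow> u \<in> P \<Longrightarrow> P = proj_class u"
  unfolding P2_def using proj_class_eq by fastforce

lemma P2_nonzero: "P \<in> P2 \<Longrightarrow> u \<in> P \<Longrightarrow> u \<noteq> (0, 0, 0 :: 'a::field)"
  unfolding P2_def proj_class_conv_smul by (auto simp: smul_eq_0_iff)

lemma P2_ex_mem: "P \<in> P2 \<Longrightarrow> \<exists>u. u \<in> P"
  unfolding P2_def using proj_class_self by blast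

lemma finite_P2: "finite (P2 :: ('a::{finite,field} \<times> 'a \<times> 'a) set set)"
  by (rule finite_subset[of _ UNIV]) auto

lemma incident_iff_dot3:
  assumes "P \<in> P2" "l \<in> P2" "v \<in> P" "w \<in> l"
  shows "incident P l \<longleftrightarrow> dot3 v w = 0"
proof
  assume "incident P l"
  then obtain v' w' where "v' \<in> P" "w' \<in> l" "dot3 v' w' = 0" unfolding incident_def by blast
  moreover obtain c e where "c \<noteq> 0" "e \<noteq> 0" "v' = smul c v" "w' = smul e w"
    using P2_eq_proj_class[OF assms(1,3)] P2_eq_proj_class[OF assms(2,4)] \<open>v' \<in> P\<close> \<open>w' \<in> l\<close>
    unfolding proj_class_conv_smul by blast
  ultimately show "dot3 v w = 0" by (simp add: dot3_smul)
next
  assume "dot3 v w = 0"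
  then show "incident P l" unfolding incident_def using assms(3,4) by blast
qed

lemma rat_points_vanish:
  assumes "homogeneous_in \<phi> d F" "P \<in> rat_points F" "u \<in> P"
  shows "tpeval F u = 0"
proof -
  obtain v where v: "P \<in> P2" "v \<in> P" "tpeval F v = 0"
    using assms(2) unfolding rat_points_def by auto
  then obtain c where "u = smul c v"
    using P2_eq_proj_class assms(3) unfolding proj_class_conv_smul by blast
  then show ?thesis using tpeval_smul[OF assms(1)] v by simp
qed

section \<open>A line meets the curve in at most \<open>deg F\<close> points\<close>

lemma obtain_projective_parameters:
  fixes lift :: "'a::field \<Rightarrow> 'a \<Rightarrow> 'a \<times> 'a \<times> 'a"
  assumes S: "S \<subseteq> P2" and lift_smul: "\<And>c x y. lift (c * x) (c * y) = smul c (lift x y)"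
    and param: "\<And>P. P \<in> S \<Longrightarrow> \<exists>x y. lift x y \<in> P"
  obtains xy where "inj_on xy S" "(0, 0) \<notin> xy ` S"
    "\<And>p p' c. p \<in> xy ` S \<Longrightarrow> p' \<in> xy ` S \<Longrightarrow> p = (c * fst p', c * snd p') \<Longrightarrow> p = p'"
    "\<And>P. P \<in> S \<Longrightarrow> lift (fst (xy P)) (snd (xy P)) \<in> P"
proof -
  have "\<forall>P\<in>S. \<exists>p. lift (fst p) (snd p) \<in> P"
    using param by fastforce
  then obtain xy where xy: "\<And>P. P \<in> S \<Longrightarrow> lift (fst (xy P)) (snd (xy P)) \<in> P"
    by (metis bchoice)
  have same_point: "P = P'" if "P \<in> S" "P' \<in> S" "xy P = (c * fst (xy P'), c * snd (xy P'))" for P P' c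
  proof -
    have "lift (fst (xy P)) (snd (xy P)) = smul c (lift (fst (xy P')) (snd (xy P')))"
      using that(3) lift_smul by simp
    moreover have "lift (fst (xy P)) (snd (xy P)) \<noteq> (0, 0, 0)"
      using P2_nonzero S xy that(1) by blast
    ultimately have "lift (fst (xy P)) (snd (xy P)) \<in> proj_class (lift (fst (xy P')) (snd (xy P')))"
      unfolding proj_class_conv_smul by (auto simp: smul_eq_0_iff)
    then show "P = P'"
      using P2_eq_proj_class S xy that(1,2) proj_class_eq by (metis subsetD)
  qed
  show ?thesis
  proof (rule that)
    show "inj_on xy S"
      using same_point[where c = 1] by (intro inj_onI) simp
    have "lift 0 0 = (0, 0, 0)" using lift_smul[of 0 0 0] by (simp add: smul_def)
    then show "(0, 0) \<notin> xy ` S"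
      using xy P2_nonzero S by (metis image_iff subsetD fst_conv snd_conv)
  qed (use same_point xy in blast)+
qed

text \<open>If \<open>L\<close> divides \<open>X - A\<close>, \<open>Y - B\<close>, \<open>Z - C\<close>, then \<open>F \<equiv> F(A, B, C) mod L\<close>. When \<open>A, B, C\<close> only
  involve the two variables singled out by \<open>\<phi>\<close>, \<open>F(A, B, C)\<close> is a binary form, which vanishes
  identically once it has more than \<open>deg F\<close> projectively distinct zeros.\<close>
lemma dvd_if_vanishes_at_parametrized_points:
  fixes F A B C L :: "'a::field tpoly" and pt :: "'a \<Rightarrow> 'a \<Rightarrow> 'a \<times> 'a \<times> 'a"
  defines "lift x y \<equiv> (tpeval A (pt x y), tpeval B (pt x y), tpeval C (pt x y))"
  assumes F: "homogeneous_in (\<lambda>_. True) d F"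
    and \<phi>: "\<And>m m'. \<phi> m \<Longrightarrow> \<phi> m' \<Longrightarrow> \<phi> (m + m')" "\<phi> 0"
    and ABC: "homogeneous_in \<phi> 1 A" "homogeneous_in \<phi> 1 B" "homogeneous_in \<phi> 1 C"
    and L: "L dvd varX - A" "L dvd varY - B" "L dvd varZ - C"
    and g: "inj_on g {..d}" "\<And>m. \<phi> m \<Longrightarrow> tdeg m = d \<Longrightarrow> m \<in> g ` {..d}"
      "\<And>s x y. s \<le> d \<Longrightarrow> monom_at (g s) (pt x y) = x ^ s * y ^ (d - s)"
    and pt_smul: "\<And>c x y. pt (c * x) (c * y) = smul c (pt x y)"
    and S: "d < card S" "S \<subseteq> P2"
    and zeros: "\<And>P v. P \<in> S \<Longrightarrow> v \<in> P \<Longrightarrow> tpeval F v = 0"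
    and param: "\<And>P. P \<in> S \<Longrightarrow> \<exists>x y. lift x y \<in> P"
  shows "L dvd F"
proof -
  have "lift (c * x) (c * y) = smul c (lift x y)" for c x y
    unfolding lift_def pt_smul tpeval_smul[OF ABC(1)] tpeval_smul[OF ABC(2)] tpeval_smul[OF ABC(3)]
    by (simp add: smul_def)
  then obtain xy where xy: "inj_on xy S" "(0, 0) \<notin> xy ` S"
    "\<And>p p' c. p \<in> xy ` S \<Longrightarrow> p' \<in> xy ` S \<Longrightarrow> p = (c * fst p', c * snd p') \<Longrightarrow> p = p'"
    "\<And>P. P \<in> S \<Longrightarrow> lift (fst (xy P)) (snd (xy P)) \<in> P"
    using obtain_projective_parameters[OF S(2) _ param] by blast
  define R where "R = tsubst F A B C"
  have "R = 0"
  proof (rule homogeneous_in_eq_0_if_zeros[OF _ g _ _ xy(2,3)])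
    show "homogeneous_in \<phi> d R"
      unfolding R_def by (rule homogeneous_in_tsubst[OF \<phi> ABC F])
    show "finite (xy ` S)" using S(1) by (intro finite_imageI card_ge_0_finite) linarith
    show "d < card (xy ` S)" using S(1) xy(1) by (simp add: card_image)
    show "tpeval R (pt x y) = 0" if "(x, y) \<in> xy ` S" for x y
      using that xy(4) zeros unfolding R_def tpeval_tsubst lift_def by (metis fst_conv imageE snd_conv)
  qed
  moreover have "L dvd F - R"
    using dvd_tsubst_diff[OF L, of F] unfolding R_def tsubst_vars .
  ultimately show ?thesis by simp
qed

lemma dot3_eq_0_solve:
  fixes a b c x y z :: "'a::field"
  assumes "dot3 (x, y, z) (a, b, c) = 0"
  shows "a \<noteq> 0 \<Longrightarrow> x = - b / a * y - c / a * z"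
    and "b \<noteq> 0 \<Longrightarrow> y = - a / b * x - c / b * z"
    and "c \<noteq> 0 \<Longrightarrow> z = - a / c * x - b / c * y"
  using assms by (auto simp: dot3_def field_simps eq_neg_iff_add_eq_0 algebra_simps)

lemma linear_form_dvd_if_vanishes_on_line_x:
  fixes F :: "'a::field tpoly"
  assumes "a \<noteq> 0" and F: "homogeneous_in (\<lambda>_. True) d F" and S: "d < card S" "S \<subseteq> P2"
    and zeros: "\<And>P v. P \<in> S \<Longrightarrow> v \<in> P \<Longrightarrow> tpeval F v = 0"
    and on_line: "\<And>P. P \<in> S \<Longrightarrow> \<exists>x y z. (x, y, z) \<in> P \<and> dot3 (x, y, z) (a, b, c) = 0"
  shows "linear_form (a, b, c) dvd F"
proof (rule dvd_if_vanishes_at_parametrized_points[OF F, where \<phi> = "\<lambda>m. fst m = 0"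
      and A = "linear_form (0, - b / a, - c / a)" and B = varY and C = varZ
      and g = "\<lambda>s. (0, s, d - s)" and pt = "\<lambda>x y. (0, x, y)", OF _ _ _ _ _ _ _ _ _ _ _ _ S zeros])
  show "linear_form (a, b, c) dvd varX - linear_form (0, - b / a, - c / a)"
    unfolding varX_def using \<open>a \<noteq> 0\<close> by (intro linear_form_dvd_diff[of _ _ "1 / a"]) (simp add: smul_def)
  show "\<exists>x y. (tpeval (linear_form (0, - b / a, - c / a)) (0, x, y), tpeval varY (0, x, y),
      tpeval varZ (0, x, y)) \<in> P" if "P \<in> S" for P
    using on_line[OF that] dot3_eq_0_solve(1) \<open>a \<noteq> 0\<close>
    by (fastforce simp: varY_def varZ_def tpeval_linear_form dot3_def)
  show "homogeneous_in (\<lambda>m. fst m = 0) 1 varY" "homogeneous_in (\<lambda>m. fst m = 0) 1 varZ"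
    "homogeneous_in (\<lambda>m. fst m = 0) 1 (linear_form (0, - b / a, - c / a))"
    unfolding varY_def varZ_def by (rule homogeneous_in_linear_form; simp)+
qed (auto simp: tdeg_def smul_def monom_at_def inj_on_def image_iff)

lemma linear_form_dvd_if_vanishes_on_line_y:
  fixes F :: "'a::field tpoly"
  assumes "b \<noteq> 0" and F: "homogeneous_in (\<lambda>_. True) d F" and S: "d < card S" "S \<subseteq> P2"
    and zeros: "\<And>P v. P \<in> S \<Longrightarrow> v \<in> P \<Longrightarrow> tpeval F v = 0"
    and on_line: "\<And>P. P \<in> S \<Longrightarrow> \<exists>x y z. (x, y, z) \<in> P \<and> dot3 (x, y, z) (a, b, c) = 0"
  shows "linear_form (a, b, c) dvd F"
proof (rule dvd_if_vanishes_at_parametrized_points[OF F, where \<phi> = "\<lambda>m. fst (snd m) = 0"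
      and A = varX and B = "linear_form (- a / b, 0, - c / b)" and C = varZ
      and g = "\<lambda>s. (s, 0, d - s)" and pt = "\<lambda>x y. (x, 0, y)", OF _ _ _ _ _ _ _ _ _ _ _ _ S zeros])
  show "linear_form (a, b, c) dvd varY - linear_form (- a / b, 0, - c / b)"
    unfolding varY_def using \<open>b \<noteq> 0\<close> by (intro linear_form_dvd_diff[of _ _ "1 / b"]) (simp add: smul_def)
  show "\<exists>x y. (tpeval varX (x, 0, y), tpeval (linear_form (- a / b, 0, - c / b)) (x, 0, y),
      tpeval varZ (x, 0, y)) \<in> P" if "P \<in> S" for P
    using on_line[OF that] dot3_eq_0_solve(2) \<open>b \<noteq> 0\<close>
    by (fastforce simp: varX_def varZ_def tpeval_linear_form dot3_def)
  show "homogeneous_in (\<lambda>m. fst (snd m) = 0) 1 varX" "homogeneous_in (\<lambda>m. fst (snd m) = 0) 1 varZ"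
    "homogeneous_in (\<lambda>m. fst (snd m) = 0) 1 (linear_form (- a / b, 0, - c / b))"
    unfolding varX_def varZ_def by (rule homogeneous_in_linear_form; simp)+
qed (auto simp: tdeg_def smul_def monom_at_def inj_on_def image_iff)

lemma linear_form_dvd_if_vanishes_on_line_z:
  fixes F :: "'a::field tpoly"
  assumes "c \<noteq> 0" and F: "homogeneous_in (\<lambda>_. True) d F" and S: "d < card S" "S \<subseteq> P2"
    and zeros: "\<And>P v. P \<in> S \<Longrightarrow> v \<in> P \<Longrightarrow> tpeval F v = 0"
    and on_line: "\<And>P. P \<in> S \<Longrightarrow> \<exists>x y z. (x, y, z) \<in> P \<and> dot3 (x, y, z) (a, b, c) = 0"
  shows "linear_form (a, b, c) dvd F"
proof (rule dvd_if_vanishes_at_parametrized_points[OF F, where \<phi> = "\<lambda>m. snd (snd m) = 0"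
      and A = varX and B = varY and C = "linear_form (- a / c, - b / c, 0)"
      and g = "\<lambda>s. (s, d - s, 0)" and pt = "\<lambda>x y. (x, y, 0)", OF _ _ _ _ _ _ _ _ _ _ _ _ S zeros])
  show "linear_form (a, b, c) dvd varZ - linear_form (- a / c, - b / c, 0)"
    unfolding varZ_def using \<open>c \<noteq> 0\<close> by (intro linear_form_dvd_diff[of _ _ "1 / c"]) (simp add: smul_def)
  show "\<exists>x y. (tpeval varX (x, y, 0), tpeval varY (x, y, 0),
      tpeval (linear_form (- a / c, - b / c, 0)) (x, y, 0)) \<in> P" if "P \<in> S" for P
    using on_line[OF that] dot3_eq_0_solve(3) \<open>c \<noteq> 0\<close>
    by (fastforce simp: varX_def varY_def tpeval_linear_form dot3_def)
  show "homogeneous_in (\<lambda>m. snd (snd m) = 0) 1 varX" "homogeneous_in (\<lambda>m. snd (snd m) = 0) 1 varY"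
    "homogeneous_in (\<lambda>m. snd (snd m) = 0) 1 (linear_form (- a / c, - b / c, 0))"
    unfolding varX_def varY_def by (rule homogeneous_in_linear_form; simp)+
qed (auto simp: tdeg_def smul_def monom_at_def inj_on_def image_iff)

lemma linear_form_dvd_if_vanishes_on_line:
  fixes F :: "'a::field tpoly"
  assumes F: "homogeneous_in (\<lambda>_. True) d F" and w: "w \<noteq> (0, 0, 0)"
    and S: "d < card S" "S \<subseteq> P2"
    and on_line: "\<And>P v. P \<in> S \<Longrightarrow> v \<in> P \<Longrightarrow> tpeval F v = 0 \<and> dot3 v w = 0"
  shows "linear_form w dvd F"
proof -
  obtain a b c where w_abc: "w = (a, b, c)" by (cases w)
  have zeros: "\<And>P v. P \<in> S \<Longrightarrow> v \<in> P \<Longrightarrow> tpeval F v = 0"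
    using on_line by blast
  have on_line': "\<exists>x y z. (x, y, z) \<in> P \<and> dot3 (x, y, z) (a, b, c) = 0" if "P \<in> S" for P
    using P2_ex_mem S(2) on_line that unfolding w_abc by (metis prod_cases3 subsetD)
  consider "a \<noteq> 0" | "b \<noteq> 0" | "c \<noteq> 0"
    using w w_abc by auto
  then show ?thesis
  proof cases
    case 1
    show ?thesis
      unfolding w_abc by (rule linear_form_dvd_if_vanishes_on_line_x[OF 1 F S]) (fact zeros, fact on_line')
  next
    case 2
    show ?thesis
      unfolding w_abc by (rule linear_form_dvd_if_vanishes_on_line_y[OF 2 F S]) (fact zeros, fact on_line')
  next
    case 3
    show ?thesis
      unfolding w_abc by (rule linear_form_dvd_if_vanishes_on_line_z[OF 3 F S]) (fact zeros, fact on_line')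
  qed
qed

lemma line_count_le_degree:
  assumes F: "homogeneous_of_degree d F" and "no_linear_components F" and l: "l \<in> P2"
  shows "line_count F l \<le> d"
proof (rule ccontr)
  assume "\<not> line_count F l \<le> d"
  define S where "S = {P \<in> rat_points F. incident P l}"
  obtain w where w: "w \<in> l" using P2_ex_mem l by blast
  then have "w \<noteq> (0, 0, 0)" using P2_nonzero l by blast
  note F' = homogeneous_in_if_homogeneous_of_degree[OF F]
  have "linear_form w dvd F"
  proof (rule linear_form_dvd_if_vanishes_on_line[OF F'])
    show "w \<noteq> (0, 0, 0)" by fact
    show "d < card S" using \<open>\<not> line_count F l \<le> d\<close> by (simp add: S_def line_count_def)
    show "S \<subseteq> P2" by (auto simp: S_def rat_points_def)
    show "tpeval F v = 0 \<and> dot3 v w = 0" if P: "P \<in> S" and v: "v \<in> P" for P v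
    proof -
      have "P \<in> rat_points F" "incident P l" "P \<in> P2" using P \<open>S \<subseteq> P2\<close> by (auto simp: S_def)
      then show ?thesis using rat_points_vanish[OF F' _ v] incident_iff_dot3[OF _ l v w] by blast
    qed
  qed
  then show False
    using \<open>no_linear_components F\<close> \<open>w \<noteq> (0, 0, 0)\<close> unfolding no_linear_components_def by blast
qed

section \<open>Counting lines and incidences\<close>

lemma card_dot3_kernel:
  fixes v :: "'a::{finite,field} \<times> 'a \<times> 'a"
  assumes "v \<noteq> (0, 0, 0)"
  shows "card {w. dot3 v w = 0} = CARD('a) * CARD('a)"
proof -
  have first: "card {w. dot3 (a, b, c) w = 0} = CARD('a) * CARD('a)" if "a \<noteq> 0" for a b c :: 'a
  proof -
    have "{w. dot3 (a, b, c) w = 0} = (\<lambda>(y, z). (- b / a * y - c / a * z, y, z)) ` UNIV"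
      using dot3_eq_0_solve(1)[OF _ that] that
      by (auto simp: dot3_def field_simps image_iff)
    moreover have "inj (\<lambda>(y, z). (- b / a * y - c / a * z, y :: 'a, z :: 'a))"
      by (auto intro!: injI)
    ultimately show ?thesis
      by (simp add: card_image flip: UNIV_Times_UNIV)
  qed
  obtain a b c where v: "v = (a, b, c)" by (cases v)
  let ?swap12 = "\<lambda>(x, y, z). (y, x, z :: 'a)" and ?swap13 = "\<lambda>(x, y, z). (z, y, x :: 'a)"
  have swap: "inj ?swap12" "inj ?swap13" by (auto intro!: injI)
  consider "a \<noteq> 0" | "b \<noteq> 0" | "c \<noteq> 0" using assms v by auto
  then show ?thesis
  proof cases
    case 1
    then show ?thesis using first v by simp
  next
    case 2
    have "{w. dot3 v w = 0} = ?swap12 ` {w. dot3 (b, a, c) w = 0}"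
      by (auto simp: v dot3_def image_iff algebra_simps)
    then show ?thesis by (simp only: card_image[OF inj_on_subset[OF swap(1) subset_UNIV]] first[OF 2])
  next
    case 3
    have "{w. dot3 v w = 0} = ?swap13 ` {w. dot3 (c, b, a) w = 0}"
      by (auto simp: v dot3_def image_iff algebra_simps)
    then show ?thesis by (simp only: card_image[OF inj_on_subset[OF swap(2) subset_UNIV]] first[OF 3])
  qed
qed

lemma card_proj_class:
  fixes w :: "'a::{finite,field} \<times> 'a \<times> 'a"
  assumes "w \<noteq> (0, 0, 0)"
  shows "card (proj_class w) = CARD('a) - 1"
proof -
  have "proj_class w = (\<lambda>c. smul c w) ` (UNIV - {0})"
    unfolding proj_class_conv_smul by auto
  moreover have "inj_on (\<lambda>c. smul c w) (UNIV - {0})"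
  proof (rule inj_onI)
    fix c e assume "smul c w = smul e w"
    then have "smul (c - e) w = (0, 0, 0)" by (simp add: smul_def algebra_simps)
    then show "c = e" using assms by (simp add: smul_eq_0_iff)
  qed
  ultimately show ?thesis by (simp add: card_image card_Diff_singleton)
qed

lemma lines_through_conv_proj_class:
  assumes "P \<in> P2" "v \<in> P"
  shows "{l \<in> P2. incident P l} = proj_class ` {w. w \<noteq> (0, 0, 0) \<and> dot3 v w = 0}"
proof (intro set_eqI iffI)
  fix l assume l: "l \<in> {l \<in> P2. incident P l}"
  then obtain w where "w \<in> l" using P2_ex_mem by blast
  with l assms show "l \<in> proj_class ` {w. w \<noteq> (0, 0, 0) \<and> dot3 v w = 0}"
    using P2_eq_proj_class P2_nonzero incident_iff_dot3 by blast
next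
  fix l assume "l \<in> proj_class ` {w. w \<noteq> (0, 0, 0) \<and> dot3 v w = 0}"
  then obtain w where w: "l = proj_class w" "w \<noteq> (0, 0, 0)" "dot3 v w = 0" by blast
  then have "l \<in> P2" using proj_class_in_P2 by simp
  with w show "l \<in> {l \<in> P2. incident P l}"
    using incident_iff_dot3[OF assms(1) _ assms(2) proj_class_self] by simp
qed

lemma CARD_field_ge_2: "CARD('a::{finite,field}) \<ge> 2"
  using card_mono[of "UNIV :: 'a set" "{0, 1}"] by simp

lemma card_lines_through:
  assumes P: "P \<in> (P2 :: ('a::{finite,field} \<times> 'a \<times> 'a) set set)"
  shows "card {l \<in> P2. incident P l} = CARD('a) + 1"
proof -
  obtain v where v: "v \<in> P" using P2_ex_mem[OF P] by blast
  define W where "W = {w. w \<noteq> (0, 0, 0) \<and> dot3 v w = 0}"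
  have "W = {w. dot3 v w = 0} - {(0, 0, 0)}" unfolding W_def by auto
  then have card_W: "card W = CARD('a) * CARD('a) - 1"
    using card_dot3_kernel[OF P2_nonzero[OF P v]] by (simp add: card_Diff_singleton dot3_def)
  have "\<Union>(proj_class ` W) = W"
  proof
    show "\<Union>(proj_class ` W) \<subseteq> W"
    proof
      fix x assume "x \<in> \<Union>(proj_class ` W)"
      then obtain w c where "w \<in> W" "c \<noteq> 0" "x = smul c w"
        unfolding proj_class_conv_smul by blast
      then show "x \<in> W"
        using dot3_smul[of 1 v c w] smul_eq_0_iff[of c w] by (simp add: W_def)
    qed
    show "W \<subseteq> \<Union>(proj_class ` W)" using proj_class_self by blast
  qed
  moreover have "(CARD('a) - 1) * card (proj_class ` W) = card (\<Union>(proj_class ` W))"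
  proof (rule card_partition)
    show "card c = CARD('a) - 1" if "c \<in> proj_class ` W" for c
      using that card_proj_class unfolding W_def by blast
    show "c1 \<inter> c2 = {}" if "c1 \<in> proj_class ` W" "c2 \<in> proj_class ` W" "c1 \<noteq> c2" for c1 c2
      using that proj_class_eq by blast
  qed simp_all
  ultimately have "(CARD('a) - 1) * card (proj_class ` W) = (CARD('a) - 1) * (CARD('a) + 1)"
    using card_W by (simp add: algebra_simps)
  then have "card (proj_class ` W) = CARD('a) + 1"
    using CARD_field_ge_2[where 'a = 'a] by (subst (asm) mult_left_cancel) auto
  then show ?thesis
    using lines_through_conv_proj_class[OF P v] by (simp add: W_def)
qed

definition cross :: "'a::comm_ring_1 \<times> 'a \<times> 'a \<Rightarrow> 'a \<times> 'a \<times> 'a \<Rightarrow> 'a \<times> 'a \<times> 'a" where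
  "cross u v = (fst (snd u) * snd (snd v) - snd (snd u) * fst (snd v),
                snd (snd u) * fst v - fst u * snd (snd v),
                fst u * fst (snd v) - fst (snd u) * fst v)"

lemma dot3_cross: "dot3 u (cross u v) = 0" "dot3 v (cross u v) = 0"
  by (simp_all add: dot3_def cross_def algebra_simps)

lemma cross_eq_0_imp_smul:
  fixes u v :: "'a::field \<times> 'a \<times> 'a"
  assumes "cross u v = (0, 0, 0)" "v \<noteq> (0, 0, 0)"
  shows "\<exists>c. u = smul c v"
proof -
  obtain u1 u2 u3 v1 v2 v3 where uv: "u = (u1, u2, u3)" "v = (v1, v2, v3)" by (cases u; cases v)
  have eqs: "u2 * v3 = u3 * v2" "u3 * v1 = u1 * v3" "u1 * v2 = u2 * v1"
    using assms(1) by (auto simp: uv cross_def)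
  consider "v1 \<noteq> 0" | "v2 \<noteq> 0" | "v3 \<noteq> 0" using assms(2) uv by auto
  then show ?thesis
  proof cases
    case 1
    then have "u = smul (u1 / v1) v" using eqs by (simp add: uv smul_def field_simps; metis mult.commute)
    then show ?thesis by blast
  next
    case 2
    then have "u = smul (u2 / v2) v" using eqs by (simp add: uv smul_def field_simps; metis mult.commute)
    then show ?thesis by blast
  next
    case 3
    then have "u = smul (u3 / v3) v" using eqs by (simp add: uv smul_def field_simps; metis mult.commute)
    then show ?thesis by blast
  qed
qed

lemma cross_cross_eq_0:
  assumes "dot3 w u = 0" "dot3 w v = 0"
  shows "cross w (cross u v) = (0, 0, 0)"
proof -
  have "cross w (cross u v) = smul (dot3 w v) u - smul (dot3 w u) v"
    by (simp add: cross_def dot3_def smul_def algebra_simps)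
  then show ?thesis using assms by (simp add: smul_def zero_prod_def)
qed

lemma card_lines_through_two_points:
  assumes P: "P \<in> P2" and Q: "Q \<in> P2" and "P \<noteq> Q"
  shows "card {l \<in> P2. incident P l \<and> incident Q l} = 1"
proof -
  obtain u v where u: "u \<in> P" and v: "v \<in> Q" using P2_ex_mem P Q by blast
  define k where "k = cross u v"
  have "k \<noteq> (0, 0, 0)"
  proof
    assume "k = (0, 0, 0)"
    then obtain c where "u = smul c v"
      using cross_eq_0_imp_smul P2_nonzero[OF Q v] unfolding k_def by blast
    moreover have "c \<noteq> 0" using P2_nonzero[OF P u] calculation by (auto simp: smul_def)
    ultimately have "u \<in> Q"
      using P2_eq_proj_class[OF Q v] unfolding proj_class_conv_smul by blast
    then show False using \<open>P \<noteq> Q\<close> P2_eq_proj_class P Q u by metis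
  qed
  define l0 where "l0 = proj_class k"
  have l0: "l0 \<in> P2" "k \<in> l0"
    unfolding l0_def using proj_class_in_P2[OF \<open>k \<noteq> _\<close>] proj_class_self by blast+
  have "{l \<in> P2. incident P l \<and> incident Q l} = {l0}"
  proof (intro set_eqI iffI)
    fix l assume "l \<in> {l \<in> P2. incident P l \<and> incident Q l}"
    then have l: "l \<in> P2" "incident P l" "incident Q l" by auto
    obtain w where w: "w \<in> l" using P2_ex_mem l(1) by blast
    have "dot3 w u = 0" "dot3 w v = 0"
      using incident_iff_dot3[OF P l(1) u w] incident_iff_dot3[OF Q l(1) v w] l
      by (simp_all add: dot3_def mult.commute)
    then have "cross w k = (0, 0, 0)" unfolding k_def by (rule cross_cross_eq_0)
    then obtain c where c: "w = smul c k" using cross_eq_0_imp_smul \<open>k \<noteq> _\<close> by blast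
    then have "c \<noteq> 0" using P2_nonzero[OF l(1) w] by (auto simp: smul_def)
    with c have "w \<in> l0" unfolding l0_def proj_class_conv_smul by blast
    then show "l \<in> {l0}" using P2_eq_proj_class[OF l(1) w] P2_eq_proj_class[OF l0(1)] by simp
  next
    fix l assume "l \<in> {l0}"
    then show "l \<in> {l \<in> P2. incident P l \<and> incident Q l}"
      using incident_iff_dot3[OF P l0(1) u l0(2)] incident_iff_dot3[OF Q l0(1) v l0(2)] l0(1)
      by (simp add: k_def dot3_cross)
  qed
  then show ?thesis by simp
qed

lemma sum_card_incident_lines_through:
  fixes X :: "('a::{finite,field} \<times> 'a \<times> 'a) set set"
  assumes X: "X \<subseteq> P2" and P: "P \<in> X"
  shows "(\<Sum>l \<in> {l \<in> P2. incident P l}. card {Q \<in> X. incident Q l}) = card X + CARD('a)"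
proof -
  let ?L = "{l \<in> P2. incident P l}"
  have fin: "finite X" "finite ?L" using finite_P2 X finite_subset by auto
  have "(\<Sum>l\<in>?L. card {Q \<in> X. incident Q l}) = (\<Sum>Q\<in>X. card {l \<in> ?L. incident Q l})"
    by (rule sum_multicount_gen) (use fin in auto)
  also have "\<dots> = card {l \<in> ?L. incident P l} + (\<Sum>Q\<in>X - {P}. card {l \<in> ?L. incident Q l})"
    using fin(1) P by (rule sum.remove)
  also have "(\<Sum>Q\<in>X - {P}. card {l \<in> ?L. incident Q l}) = (\<Sum>Q\<in>X - {P}. 1)"
  proof (rule sum.cong)
    fix Q assume "Q \<in> X - {P}"
    then have "card {l \<in> P2. incident P l \<and> incident Q l} = 1"
      using X P by (intro card_lines_through_two_points) auto
    then show "card {l \<in> ?L. incident Q l} = 1"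
      by (simp add: conj_assoc)
  qed simp
  finally have "(\<Sum>l\<in>?L. card {Q \<in> X. incident Q l}) = card ?L + card (X - {P})"
    by simp
  moreover have "card ?L = CARD('a) + 1"
    using card_lines_through X P by auto
  moreover have "0 < card X" using fin(1) P card_gt_0_iff by blast
  then have "card (X - {P}) + 1 = card X" using P by (simp add: card_Diff_singleton)
  ultimately show ?thesis by simp
qed

lemma card_less_add_sum_le:
  fixes f :: "'i \<Rightarrow> nat"
  assumes "finite I" and le: "\<And>i. i \<in> I \<Longrightarrow> f i \<le> m"
  shows "card {i \<in> I. f i < m} + sum f I \<le> card I * m"
    and "card {i \<in> I. f i < m} + sum f I = card I * m \<Longrightarrow> i \<in> I \<Longrightarrow> f i < m \<Longrightarrow> f i = m - 1"
proof -
  define h where "h i = f i + (if f i < m then 1 else 0)" for i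
  have sum_h: "sum h I = card {i \<in> I. f i < m} + sum f I"
    using \<open>finite I\<close> by (simp add: h_def sum.distrib sum.inter_filter[symmetric])
  have h_le: "h i \<le> m" if "i \<in> I" for i
    using le[OF that] by (auto simp: h_def)
  show "card {i \<in> I. f i < m} + sum f I \<le> card I * m"
    using sum_bounded_above[of I h m] h_le by (simp add: sum_h)
  assume "card {i \<in> I. f i < m} + sum f I = card I * m" "i \<in> I" "f i < m"
  then have "h i = m"
    using sum_mono_inv[of h I "\<lambda>_. m"] h_le \<open>finite I\<close> by (simp add: sum_h)
  then show "f i = m - 1" using \<open>f i < m\<close> by (simp add: h_def)
qed

lemma three_full_lines_through_point:
  fixes X :: "('a::{finite,field} \<times> 'a \<times> 'a) set set"
  defines "q \<equiv> CARD('a)" and "n l \<equiv> card {Q \<in> X. incident Q l}"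
  assumes X: "X \<subseteq> P2" "card X = (q - 1)^2" and bound: "\<And>l. l \<in> P2 \<Longrightarrow> n l \<le> q - 1"
    and P: "P \<in> X"
  shows "3 \<le> card {l \<in> P2. incident P l \<and> n l = q - 1}"
    and "card {l \<in> P2. incident P l \<and> n l = q - 1} = 3 \<Longrightarrow>
      card {l \<in> P2. incident P l \<and> n l = q - 2} = q - 2
      \<and> (\<forall>l\<in>P2. incident P l \<longrightarrow> n l = q - 1 \<or> n l = q - 2)"
proof -
  define L where "L = {l \<in> P2. incident P l}"
  define U where "U = {l \<in> L. n l < q - 1}"
  have T: "{l \<in> P2. incident P l \<and> n l = q - 1} = {l \<in> L. \<not> n l < q - 1}"
    using bound by (auto simp: L_def intro: le_antisym)
  obtain p where p: "q = p + 2"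
    using CARD_field_ge_2 unfolding q_def by (metis add.commute nat_le_iff_add)
  have fin: "finite L" and card_L: "card L = p + 3"
    using finite_P2 card_lines_through[of P] X P p by (auto simp: L_def q_def)
  have sum_L: "sum n L = (p + 1)^2 + p + 2"
    using sum_card_incident_lines_through[OF X(1) P] X(2) p by (simp add: L_def n_def q_def)
  have bound_L: "\<And>l. l \<in> L \<Longrightarrow> n l \<le> p + 1" using bound p by (simp add: L_def)
  have "card U + sum n L \<le> card L * (p + 1)"
    using card_less_add_sum_le(1)[of L n "p + 1", OF fin bound_L] p by (simp add: U_def)
  then have card_U: "card U \<le> p"
    using card_L sum_L by (simp add: algebra_simps power2_eq_square)
  have "L = U \<union> {l \<in> L. \<not> n l < q - 1}" "U \<inter> {l \<in> L. \<not> n l < q - 1} = {}"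
    by (auto simp: U_def)
  then have card_T: "card {l \<in> P2. incident P l \<and> n l = q - 1} = p + 3 - card U"
    unfolding T using card_L fin card_Un_disjoint[of U "{l \<in> L. \<not> n l < q - 1}"]
    by (simp add: U_def)
  then show "3 \<le> card {l \<in> P2. incident P l \<and> n l = q - 1}"
    using card_U by simp
  assume "card {l \<in> P2. incident P l \<and> n l = q - 1} = 3"
  then have "card U = p" using card_T card_U by simp
  then have "card U + sum n L = card L * (p + 1)"
    using card_L sum_L by (simp add: algebra_simps power2_eq_square)
  then have "card {l \<in> L. n l < p + 1} + sum n L = card L * (p + 1)"
    using p by (simp add: U_def)
  then have U_count: "n l = p" if "l \<in> U" for l
    using card_less_add_sum_le(2)[of L n "p + 1", OF fin bound_L] that p by (simp add: U_def)
  have "{l \<in> P2. incident P l \<and> n l = q - 2} = U"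
    using U_count p by (auto simp: U_def L_def)
  moreover have "n l = q - 1 \<or> n l = q - 2" if "l \<in> P2" "incident P l" for l
    using U_count[of l] bound[OF that(1)] that p by (force simp: U_def L_def)
  ultimately show "card {l \<in> P2. incident P l \<and> n l = q - 2} = q - 2
      \<and> (\<forall>l\<in>P2. incident P l \<longrightarrow> n l = q - 1 \<or> n l = q - 2)"
    using \<open>card U = p\<close> p by simp
qed

lemma psi_conv_card: "psi F i P = card {l \<in> P2. incident P l \<and> line_count F l = i}"
  unfolding psi_def lines_A_def by (metis (lifting) conj_commute mem_Collect_eq)

lemma sum_psi_eq:
  fixes F :: "'a::{finite,field} tpoly"
  shows "(\<Sum>P\<in>rat_points F. psi F i P) = i * a_count F i"
  unfolding psi_def a_count_def
proof (rule sum_multicount)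
  show "finite (rat_points F)" "finite (lines_A F i)"
    by (auto simp: lines_A_def rat_points_def finite_P2 intro: finite_subset[OF _ finite_P2])
  show "\<forall>l\<in>lines_A F i. card {P \<in> rat_points F. incident P l} = i"
    by (simp add: lines_A_def line_count_def)
qed

theorem lemma3p7:
  fixes F :: "'a::{finite, field} tpoly"
  defines "q \<equiv> CARD('a)"
  assumes q5: "q \<ge> 5"
    and deg: "homogeneous_of_degree (q - 1) F"
    and nolin: "no_linear_components F"
    and npts: "Nq F = (q - 1)^2"
  shows "(\<forall>P\<in>rat_points F. psi F (q - 1) P \<ge> 3)
       \<and> a_count F (q - 1) \<ge> 3 * (q - 1)
       \<and> (\<forall>P\<in>rat_points F. psi F (q - 1) P = 3 \<longrightarrow>
             card {l \<in> P2. incident P l \<and> line_count F l = q - 1} = 3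
           \<and> card {l \<in> P2. incident P l \<and> line_count F l = q - 2} = q - 2
           \<and> (\<forall>l\<in>P2. incident P l \<longrightarrow> line_count F l = q - 1 \<or> line_count F l = q - 2))"
proof -
  have X: "rat_points F \<subseteq> P2" "card (rat_points F) = (q - 1)^2"
    using npts by (auto simp: rat_points_def Nq_def)
  have bound: "\<And>l. l \<in> P2 \<Longrightarrow> card {Q \<in> rat_points F. incident Q l} \<le> q - 1"
    using line_count_le_degree[OF deg nolin] by (simp add: line_count_def)
  note through_P = three_full_lines_through_point[OF X[unfolded q_def] bound[unfolded q_def],
      folded q_def line_count_def]
  have psi_ge_3: "\<forall>P\<in>rat_points F. psi F (q - 1) P \<ge> 3"
    using through_P(1) unfolding psi_conv_card by blast
  have "card (rat_points F) * 3 \<le> (\<Sum>P\<in>rat_points F. psi F (q - 1) P)"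
    using sum_bounded_below[of "rat_points F" 3 "psi F (q - 1)"] psi_ge_3 by simp
  then have "(q - 1) * (3 * (q - 1)) \<le> (q - 1) * a_count F (q - 1)"
    by (simp add: sum_psi_eq X(2) power2_eq_square mult_ac)
  then have "a_count F (q - 1) \<ge> 3 * (q - 1)"
    using q5 by simp
  then show ?thesis
    using psi_ge_3 through_P(2) unfolding psi_conv_card by blast
qed

end
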